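(* Assume the Continuity Assumption, the Consistency Assumption and the Estimator Continuity Assumption below, and let $g^*$ be the optimal fair classifier described below. Let $\tilde g$ be the pseudo-oracle classifier described below. Then $$\limsup_{n\to\infty}\Big(\mathbb{E}_{\mathcal{D}_n}[\mathcal{R}(\tilde g)]-\mathcal{R}(g^* )\Big)\le0.$$
   Context: Let $(X,S,Y)$ be a random tuple in $\mathbb{R}^d\times\{0,1\}\times\{0,1\}$ with joint law $\mathbb{P}$, $\mathbb{P}(S=1)\in(0,1)$, $\mathbb{P}(Y=1)\in(0,1)$. Classifiers are measurable $g:\mathbb{R}^d\times\{0,1\}\to\{0,1\}$, $\mathcal{G}$ is the set of all classifiers, $\mathcal{R}(g)=\mathbb{P}(g(X,S)\neq Y)$ (for data-dependent $g$, over a fresh independent copy, conditional on the data). $\eta(x,s)=\mathbb{P}(Y=1\mid X=x,S=s)$; $\mathbb{E}_{X\mid S=s}$ is expectation w.r.t. the conditional law of $X$ given $S=s$. The optimal fair classifier $g^*$ is a solution of $\min_{g\in\mathcal{G}}\{\mathcal{R}(g):\mathbb{P}(g(X,S)=1\mid Y=1,S=1)=\mathbb{P}(g(X,S)=1\mid Y=1,S=0)\}$, of the form $g^*(x,1)=\mathbf{1}\{1\le\eta(x,1)(2-\theta^*/\mathbb{P}(Y=1,S=1))\}$, $g^*(x,0)=\mathbf{1}\{1\le\eta(x,0)(2+\theta^*/\mathbb{P}(Y=1,S=0))\}$ with $\theta^*$ equalizing $\mathbb{E}_{X\mid S=s}[\eta(X,s)g^*(X,s)]/\mathbb{P}(Y=1\mid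 S=s)$ across $s\in\{0,1\}$. Continuity Assumption: for each $s$, $t\mapsto\mathbb{P}(\eta(X,S)\le t\mid S=s)$ is continuous on $(0,1)$, and $\mathbb{P}(\eta(X,s)\ge1/2\mid S=s)>0$. A labeled sample $\mathcal{D}_n$ of $n$ i.i.d. copies of $(X,S,Y)$ is given, and $\hat\eta:\mathbb{R}^d\times\{0,1\}\to[0,1]$ is an estimator built from $\mathcal{D}_n$. Consistency Assumption: for all $s$, (i) $\mathbb{E}_{\mathcal{D}_n}\mathbb{E}_{X\mid S=s}|\eta(X,s)-\hat\eta(X,s)|\to0$ as $n\to\infty$; (ii) there is a sequence $c_{n,N}>0$ with $c_{n,N}\to0$ and $1/(c_{n,N}\sqrt N)\to0$ such that $\mathbb{E}_{X\mid S=s}[\hat\eta(X,s)]\ge c_{n,N}$ almost surely. Estimator Continuity Assumption: almost surely, for all $s$, $t\mapsto\mathbb{P}(\hat\eta(X,s)\le t\mid S=s)$ is continuous on $(0,1)$. Pseudo-oracle: for $\theta\in\mathbb{R}$ let $\tilde g_\theta(x,1)=\mathbf{1}\{1\le\hat\eta(x,1)(2-\theta/(\mathbb{E}_{X\mid S=1}[\hat\eta(X,1)]\,\mathbb{P}(S=1)))\}$ and $\tilde g_\theta(x,0)=\mathbf{1}\{1\le\hat\eta(x,0)(2+\theta/(\mathbb{E}_{X\mid S=0}[\hat\eta(X,0)]\,\mathbb{P}(S=0)))\}$; let $\tilde\theta$ be a solution of $\frac{\mathbb{E}_{X\mid S=1}[\hat\eta(X,1)\tilde g_\theta(X,1)]}{\mathbb{E}_{X\mid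 S=1}[\hat\eta(X,1)]}=\frac{\mathbb{E}_{X\mid S=0}[\hat\eta(X,0)\tilde g_\theta(X,0)]}{\mathbb{E}_{X\mid S=0}[\hat\eta(X,0)]}$, and $\tilde g=\tilde g_{\tilde\theta}$. *)

theory Defs
  imports "HOL-Probability.Probability"
begin

text \<open>A point z of the joint space is (X, S, Y); the labels S and Y in {0,1} are
  encoded as bool (True = 1).\<close>

type_synonym ('x) obs = "'x \<times> bool \<times> bool"

definition obs_space :: "('x::topological_space) obs measure" where
  "obs_space = borel \<Otimes>\<^sub>M (count_space UNIV \<Otimes>\<^sub>M count_space UNIV)"

definition pS :: "'x obs measure \<Rightarrow> bool \<Rightarrow> real" where
  "pS P s = measure P {z \<in> space P. fst (snd z) = s}"

definition pY :: "'x obs measure \<Rightarrow> real" where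
  "pY P = measure P {z \<in> space P. snd (snd z)}"

definition pYS :: "'x obs measure \<Rightarrow> bool \<Rightarrow> real" where
  "pYS P s = measure P {z \<in> space P. snd (snd z) \<and> fst (snd z) = s}"

definition condE :: "'x obs measure \<Rightarrow> bool \<Rightarrow> ('x \<Rightarrow> real) \<Rightarrow> real" where
  "condE P s f = (\<integral>z. (if fst (snd z) = s then f (fst z) else 0) \<partial>P) / pS P s"

text \<open>eta is (a version of) the regression function eta(x,s) = P(Y=1 | X=x, S=s).\<close>
definition is_regression :: "('x::topological_space) obs measure \<Rightarrow> ('x \<Rightarrow> bool \<Rightarrow> real) \<Rightarrow> bool" where
  "is_regression P eta \<longleftrightarrow>
     (\<lambda>(x, s). eta x s) \<in> borel_measurable (borel \<Otimes>\<^sub>M count_space UNIV) \<and>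
     (\<forall>x s. 0 \<le> eta x s \<and> eta x s \<le> 1) \<and>
     (\<forall>A \<in> sets (borel \<Otimes>\<^sub>M count_space UNIV).
        (\<integral>z. indicator A (fst z, fst (snd z)) * eta (fst z) (fst (snd z)) \<partial>P)
          = measure P {z \<in> space P. (fst z, fst (snd z)) \<in> A \<and> snd (snd z)})"

definition classifier :: "(('x::topological_space) \<Rightarrow> bool \<Rightarrow> bool) \<Rightarrow> bool" where
  "classifier g \<longleftrightarrow>
     (\<lambda>(x, s). g x s) \<in> measurable (borel \<Otimes>\<^sub>M count_space UNIV) (count_space UNIV)"

definition risk :: "'x obs measure \<Rightarrow> ('x \<Rightarrow> bool \<Rightarrow> bool) \<Rightarrow> real" where
  "risk P g = measure P {z \<in> space P. g (fst z) (fst (snd z)) \<noteq> snd (snd z)}"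

definition tpr :: "'x obs measure \<Rightarrow> ('x \<Rightarrow> bool \<Rightarrow> bool) \<Rightarrow> bool \<Rightarrow> real" where
  "tpr P g s = measure P {z \<in> space P. g (fst z) (fst (snd z)) \<and> snd (snd z) \<and> fst (snd z) = s}
               / pYS P s"

definition fair :: "'x obs measure \<Rightarrow> ('x \<Rightarrow> bool \<Rightarrow> bool) \<Rightarrow> bool" where
  "fair P g \<longleftrightarrow> tpr P g True = tpr P g False"

definition optimal_fair :: "('x::topological_space) obs measure \<Rightarrow> ('x \<Rightarrow> bool \<Rightarrow> bool) \<Rightarrow> bool" where
  "optimal_fair P g \<longleftrightarrow> classifier g \<and> fair P g \<and>
     (\<forall>g'. classifier g' \<and> fair P g' \<longrightarrow> risk P g \<le> risk P g')"

definition fair_form :: "'x obs measure \<Rightarrow> ('x \<Rightarrow> bool \<Rightarrow> real) \<Rightarrow> ('x \<Rightarrow> bool \<Rightarrow> bool) \<Rightarrow> bool" where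
  "fair_form P eta g \<longleftrightarrow> (\<exists>\<theta>::real.
     (\<forall>x. g x True = (1 \<le> eta x True * (2 - \<theta> / pYS P True))) \<and>
     (\<forall>x. g x False = (1 \<le> eta x False * (2 + \<theta> / pYS P False))) \<and>
     condE P True (\<lambda>x. eta x True * of_bool (g x True)) / (pYS P True / pS P True)
       = condE P False (\<lambda>x. eta x False * of_bool (g x False)) / (pYS P False / pS P False))"

definition gtil :: "'x obs measure \<Rightarrow> ('x \<Rightarrow> bool \<Rightarrow> real) \<Rightarrow> real \<Rightarrow> 'x \<Rightarrow> bool \<Rightarrow> bool" where
  "gtil P eh \<theta> x s =
     (if s then 1 \<le> eh x True * (2 - \<theta> / (condE P True (\<lambda>x. eh x True) * pS P True))
      else 1 \<le> eh x False * (2 + \<theta> / (condE P False (\<lambda>x. eh x False) * pS P False)))"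

definition pseudo_eq :: "'x obs measure \<Rightarrow> ('x \<Rightarrow> bool \<Rightarrow> real) \<Rightarrow> real \<Rightarrow> bool" where
  "pseudo_eq P eh \<theta> \<longleftrightarrow>
     condE P True (\<lambda>x. eh x True * of_bool (gtil P eh \<theta> x True)) / condE P True (\<lambda>x. eh x True)
     = condE P False (\<lambda>x. eh x False * of_bool (gtil P eh \<theta> x False)) / condE P False (\<lambda>x. eh x False)"

definition sample :: "'x obs measure \<Rightarrow> nat \<Rightarrow> (nat \<Rightarrow> 'x obs) measure" where
  "sample P n = PiM {..<n} (\<lambda>_. P)"

end

theory Submission
  imports Defs
begin

text \<open>
  Fix an estimate \<open>h\<close> of \<open>\<eta>\<close>, a solution \<open>\<theta>\<close> of the pseudo-oracle equation and any fair
  classifier \<open>g\<close>; write \<open>e\<^sub>s\<close> for the L1 error of \<open>h\<close> on group \<open>s\<close>. On each group the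
  pseudo-oracle thresholds \<open>h\<close> against a Lagrangian cost, so its excess risk over \<open>g\<close>
  is a Lagrangian term plus \<open>2 e\<^sub>s\<close>. Summed over the groups, the pseudo-oracle equation
  cancels its own Lagrangian terms, and the fairness of \<open>g\<close> cancels those of \<open>g\<close> up to
  \<open>O(e\<^sub>s)\<close>, provided \<open>|\<theta>| \<le> 1\<close>. That bound holds once the errors are small, since
  otherwise one group would receive no positives at all; large errors are absorbed by
  \<open>risk \<le> 1\<close>. Hence the excess risk is \<open>O(e\<^sub>1 + e\<^sub>0)\<close> deterministically, and
  consistency (i) finishes the proof after taking expectations over the sample.
\<close>

definition stratum_integral :: "('x::topological_space) obs measure \<Rightarrow> bool \<Rightarrow> ('x \<Rightarrow> real) \<Rightarrow> real" where
  "stratum_integral P s f = (\<integral>z. (if fst (snd z) = s then f (fst z) else 0) \<partial>P)"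

definition bounded_borel :: "('x::topological_space \<Rightarrow> real) \<Rightarrow> bool" where
  "bounded_borel f \<longleftrightarrow> f \<in> borel_measurable borel \<and> (\<exists>B. \<forall>x. \<bar>f x\<bar> \<le> B)"

definition measurable_sections :: "('x::topological_space \<Rightarrow> bool \<Rightarrow> bool) \<Rightarrow> bool" where
  "measurable_sections g \<longleftrightarrow> (\<forall>s. (\<lambda>x. g x s) \<in> measurable borel (count_space UNIV))"

lemma bounded_borel_const [intro, simp]: "bounded_borel (\<lambda>_. c)"
  unfolding bounded_borel_def by auto

lemma bounded_borel_add [intro]: "bounded_borel f \<Longrightarrow> bounded_borel g \<Longrightarrow> bounded_borel (\<lambda>x. f x + g x)"
  unfolding bounded_borel_def
  by (auto intro!: exI[where x="_ + _"] abs_triangle_ineq[THEN order_trans] add_mono)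

lemma bounded_borel_diff [intro]: "bounded_borel f \<Longrightarrow> bounded_borel g \<Longrightarrow> bounded_borel (\<lambda>x. f x - g x)"
  unfolding bounded_borel_def
  by (auto intro!: exI[where x="_ + _"] abs_triangle_ineq4[THEN order_trans] add_mono)

lemma bounded_borel_mult [intro]: "bounded_borel f \<Longrightarrow> bounded_borel g \<Longrightarrow> bounded_borel (\<lambda>x. f x * g x)"
  unfolding bounded_borel_def
proof (elim conjE exE, intro conjI)
  fix B1 B2 assume "\<forall>x. \<bar>f x\<bar> \<le> B1" "\<forall>x. \<bar>g x\<bar> \<le> B2"
  then show "\<exists>B. \<forall>x. \<bar>f x * g x\<bar> \<le> B"
    by (intro exI[where x="B1 * B2"]) (auto simp: abs_mult intro!: mult_mono order_trans[OF abs_ge_zero])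
qed auto

lemma bounded_borel_abs [intro]: "bounded_borel f \<Longrightarrow> bounded_borel (\<lambda>x. \<bar>f x\<bar>)"
  unfolding bounded_borel_def by auto

lemma bounded_borel_unit_interval:
  "f \<in> borel_measurable borel \<Longrightarrow> (\<And>x. 0 \<le> f x \<and> f x \<le> 1) \<Longrightarrow> bounded_borel f"
  unfolding bounded_borel_def by (auto intro!: exI[where x=1] simp: abs_le_iff)

lemma bounded_borel_of_bool [intro]: "Measurable.pred borel Q \<Longrightarrow> bounded_borel (\<lambda>x. of_bool (Q x))"
  by (rule bounded_borel_unit_interval) auto

lemmas bounded_borel_intros =
  bounded_borel_const bounded_borel_add bounded_borel_diff bounded_borel_mult bounded_borel_abs

lemma measurable_sectionsD [measurable_dest]:
  "measurable_sections g \<Longrightarrow> (\<lambda>x. g x s) \<in> measurable borel (count_space UNIV)"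
  unfolding measurable_sections_def by blast

lemma bounded_borel_classifier [intro]: "measurable_sections g \<Longrightarrow> bounded_borel (\<lambda>x. of_bool (g x s))"
  by (intro bounded_borel_of_bool) (rule measurable_sectionsD)

lemma classifier_imp_measurable_sections: "classifier g \<Longrightarrow> measurable_sections g"
  unfolding classifier_def measurable_sections_def
proof
  fix s assume "(\<lambda>(x, s). g x s) \<in> measurable (borel \<Otimes>\<^sub>M count_space UNIV) (count_space UNIV)"
  then have "(\<lambda>x. (\<lambda>(x, s). g x s) (x, s)) \<in> measurable borel (count_space UNIV)"
    by measurable
  then show "(\<lambda>x. g x s) \<in> measurable borel (count_space UNIV)" by simp
qed

lemma regression_measurable [measurable_dest]:
  "is_regression P eta \<Longrightarrow> (\<lambda>x. eta x s) \<in> borel_measurable borel"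
  unfolding is_regression_def by (auto intro: measurable_Pair_compose_split)

lemma regression_nonneg: "is_regression P eta \<Longrightarrow> 0 \<le> eta x s"
  and regression_le_1: "is_regression P eta \<Longrightarrow> eta x s \<le> 1"
  unfolding is_regression_def by auto

lemma bounded_borel_regression: "is_regression P eta \<Longrightarrow> bounded_borel (\<lambda>x. eta x s)"
  by (intro bounded_borel_unit_interval regression_measurable) (auto intro: regression_nonneg regression_le_1)

lemma condE_eq_stratum_integral: "condE P s f = stratum_integral P s f / pS P s"
  unfolding condE_def stratum_integral_def ..

locale obs_prob_space = prob_space P for P :: "('x::topological_space) obs measure" +
  assumes sets_P: "sets P = sets obs_space"
begin

lemma measurable_fst [measurable]: "fst \<in> measurable P borel"
  unfolding measurable_cong_sets[OF sets_P refl] obs_space_def by measurable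

lemma measurable_group [measurable]: "(\<lambda>z. fst (snd z)) \<in> measurable P (count_space UNIV)"
  unfolding measurable_cong_sets[OF sets_P refl] obs_space_def by measurable

lemma measurable_label [measurable]: "(\<lambda>z. snd (snd z)) \<in> measurable P (count_space UNIV)"
  unfolding measurable_cong_sets[OF sets_P refl] obs_space_def by measurable

lemma measurable_classification:
  assumes "measurable_sections g"
  shows "Measurable.pred P (\<lambda>z. g (fst z) (fst (snd z)))"
proof -
  note [measurable] = measurable_sectionsD[OF assms]
  have "(\<lambda>z. g (fst z) (fst (snd z))) = (\<lambda>z. if fst (snd z) then g (fst z) True else g (fst z) False)"
    by (auto simp: fun_eq_iff)
  then show ?thesis by simp
qed

lemma integrable_bounded: "(f::_ \<Rightarrow> real) \<in> borel_measurable P \<Longrightarrow> (\<And>z. \<bar>f z\<bar> \<le> B) \<Longrightarrow> integrable P f"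
  by (rule integrable_const_bound[where B=B]) auto

lemma integrable_stratum:
  assumes "bounded_borel f"
  shows "integrable P (\<lambda>z. if fst (snd z) = s then f (fst z) else 0)"
proof -
  from assms obtain B where [measurable]: "f \<in> borel_measurable borel" and B: "\<And>x. \<bar>f x\<bar> \<le> B"
    unfolding bounded_borel_def by blast
  show ?thesis
    by (rule integrable_bounded[where B=B]) (use B order_trans[OF abs_ge_zero B] in auto)
qed

lemma integral_of_bool: "Measurable.pred P Q \<Longrightarrow> (\<integral>z. of_bool (Q z) \<partial>P) = measure P {z \<in> space P. Q z}"
proof -
  have "(\<lambda>z. of_bool (Q z)::real) = indicator {z. Q z}" "{z. Q z} \<inter> space P = {z \<in> space P. Q z}"
    by (auto simp: fun_eq_iff)
  then show ?thesis by (simp add: Bochner_Integration.integral_indicator)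
qed

lemma stratum_integral_add:
  "bounded_borel f \<Longrightarrow> bounded_borel g \<Longrightarrow>
    stratum_integral P s (\<lambda>x. f x + g x) = stratum_integral P s f + stratum_integral P s g"
  unfolding stratum_integral_def
  by (subst Bochner_Integration.integral_add[symmetric])
     (auto intro!: integrable_stratum Bochner_Integration.integral_cong)

lemma stratum_integral_diff:
  "bounded_borel f \<Longrightarrow> bounded_borel g \<Longrightarrow>
    stratum_integral P s (\<lambda>x. f x - g x) = stratum_integral P s f - stratum_integral P s g"
  unfolding stratum_integral_def
  by (subst Bochner_Integration.integral_diff[symmetric])
     (auto intro!: integrable_stratum Bochner_Integration.integral_cong)

lemma stratum_integral_cmult: "stratum_integral P s (\<lambda>x. c * f x) = c * stratum_integral P s f"
proof -
  have eq: "(\<lambda>z. if fst (snd z) = s then c * f (fst z) else 0)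
      = (\<lambda>z. c * (if fst (snd z) = s then f (fst z) else 0))"
    by auto
  show ?thesis unfolding stratum_integral_def eq by (rule integral_mult_right_zero)
qed

lemma stratum_integral_mono:
  "bounded_borel f \<Longrightarrow> bounded_borel g \<Longrightarrow> (\<And>x. f x \<le> g x) \<Longrightarrow>
    stratum_integral P s f \<le> stratum_integral P s g"
  unfolding stratum_integral_def by (rule integral_mono) (auto intro!: integrable_stratum)

lemma stratum_integral_nonneg: "(\<And>x. 0 \<le> f x) \<Longrightarrow> 0 \<le> stratum_integral P s f"
  unfolding stratum_integral_def by (rule integral_nonneg_AE) auto

lemma stratum_integral_abs: "\<bar>stratum_integral P s f\<bar> \<le> stratum_integral P s (\<lambda>x. \<bar>f x\<bar>)"
proof -
  have eq: "(\<lambda>z. if fst (snd z) = s then \<bar>f (fst z)\<bar> else 0) = (\<lambda>z. \<bar>if fst (snd z) = s then f (fst z) else 0\<bar>)"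
    by auto
  show ?thesis unfolding stratum_integral_def eq by (rule integral_abs_bound)
qed

lemma stratum_integral_const: "stratum_integral P s (\<lambda>_. c) = c * pS P s"
proof -
  have eq: "(\<lambda>z. if fst (snd z) = s then c else 0) = (\<lambda>z. c * of_bool (fst (snd z) = s))"
    by auto
  show ?thesis
    unfolding stratum_integral_def pS_def eq by (simp add: integral_of_bool)
qed

lemma pS_True_plus_pS_False: "pS P True + pS P False = 1"
proof -
  have "pS P True + pS P False = measure P ({z \<in> space P. fst (snd z)} \<union> {z \<in> space P. \<not> fst (snd z)})"
    unfolding pS_def by (subst finite_measure_Union) auto
  also have "{z \<in> space P. fst (snd z)} \<union> {z \<in> space P. \<not> fst (snd z)} = space P"
    by auto
  finally show ?thesis by (simp add: prob_space)
qed

lemma measure_regression_stratum: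
  assumes reg: "is_regression P eta" and B: "B \<in> sets borel"
  shows "measure P {z \<in> space P. fst z \<in> B \<and> fst (snd z) = s \<and> snd (snd z)}
       = stratum_integral P s (\<lambda>x. indicator B x * eta x s)"
proof -
  have "B \<times> {s} \<in> sets (borel \<Otimes>\<^sub>M count_space UNIV)"
    using B by (intro pair_measureI) auto
  with reg have lhs: "(\<integral>z. indicator (B \<times> {s}) (fst z, fst (snd z)) * eta (fst z) (fst (snd z)) \<partial>P)
      = measure P {z \<in> space P. (fst z, fst (snd z)) \<in> B \<times> {s} \<and> snd (snd z)}"
    unfolding is_regression_def by blast
  have integrand: "(\<lambda>z. indicator (B \<times> {s}) (fst z, fst (snd z)) * eta (fst z) (fst (snd z)))
      = (\<lambda>z. if fst (snd z) = s then indicator B (fst z) * eta (fst z) s else 0)"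
    by (auto simp: fun_eq_iff indicator_def)
  have event: "{z \<in> space P. (fst z, fst (snd z)) \<in> B \<times> {s} \<and> snd (snd z)}
      = {z \<in> space P. fst z \<in> B \<and> fst (snd z) = s \<and> snd (snd z)}"
    by auto
  show ?thesis using lhs unfolding integrand event stratum_integral_def by simp
qed

lemma pYS_eq_stratum_integral: "is_regression P eta \<Longrightarrow> pYS P s = stratum_integral P s (\<lambda>x. eta x s)"
  using measure_regression_stratum[of eta UNIV s] unfolding pYS_def by (simp add: conj_commute)

lemma measure_true_positives:
  assumes reg: "is_regression P eta" and g: "measurable_sections g"
  shows "measure P {z \<in> space P. fst (snd z) = s \<and> g (fst z) s \<and> snd (snd z)}
       = stratum_integral P s (\<lambda>x. of_bool (g x s) * eta x s)"
proof -
  note [measurable] = measurable_sectionsD[OF g]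
  have "{x. g x s} \<in> sets borel" by measurable
  moreover have "(\<lambda>x. of_bool (g x s) * eta x s) = (\<lambda>x. indicator {x. g x s} x * eta x s)"
    by (auto simp: fun_eq_iff)
  ultimately show ?thesis
    using measure_regression_stratum[OF reg, of "{x. g x s}" s] by (simp add: conj_ac)
qed

lemma risk_eq_stratum_integrals:
  assumes reg: "is_regression P eta" and g: "measurable_sections g"
  shows "risk P g = pY P + stratum_integral P True (\<lambda>x. of_bool (g x True) * (1 - 2 * eta x True))
                         + stratum_integral P False (\<lambda>x. of_bool (g x False) * (1 - 2 * eta x False))"
proof -
  note [measurable] = measurable_sectionsD[OF g] measurable_classification[OF g]
  define classified :: "bool \<Rightarrow> 'x obs \<Rightarrow> real"
    where "classified s z = (if fst (snd z) = s then of_bool (g (fst z) s) else 0)" for s z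
  define true_pos :: "bool \<Rightarrow> 'x obs \<Rightarrow> real"
    where "true_pos s z = of_bool (fst (snd z) = s \<and> g (fst z) s \<and> snd (snd z))" for s z
  have [measurable]: "classified s \<in> borel_measurable P" "true_pos s \<in> borel_measurable P" for s
    unfolding classified_def true_pos_def by measurable
  have [simp]: "integrable P (classified s)" "integrable P (true_pos s)"
    "integrable P (\<lambda>z. of_bool (snd (snd z)) :: real)" for s
    by (rule integrable_bounded[where B=1]; simp add: classified_def true_pos_def)+
  have "(\<lambda>z. of_bool (g (fst z) (fst (snd z)) \<noteq> snd (snd z)) :: real)
     = (\<lambda>z. of_bool (snd (snd z)) + classified True z + classified False z
            - 2 * true_pos True z - 2 * true_pos False z)"
    by (auto simp: fun_eq_iff classified_def true_pos_def)
  then have "risk P g = pY P + integral\<^sup>L P (classified True) + integral\<^sup>L P (classified False)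
                 - 2 * integral\<^sup>L P (true_pos True) - 2 * integral\<^sup>L P (true_pos False)"
    unfolding risk_def pY_def by (simp add: integral_of_bool[symmetric])
  moreover have "integral\<^sup>L P (classified s) = stratum_integral P s (\<lambda>x. of_bool (g x s))" for s
    unfolding classified_def stratum_integral_def ..
  moreover have "integral\<^sup>L P (true_pos s) = stratum_integral P s (\<lambda>x. of_bool (g x s) * eta x s)" for s
    unfolding true_pos_def by (simp add: integral_of_bool measure_true_positives[OF reg g])
  moreover have "stratum_integral P s (\<lambda>x. of_bool (g x s) * (1 - 2 * eta x s))
      = stratum_integral P s (\<lambda>x. of_bool (g x s)) - 2 * stratum_integral P s (\<lambda>x. of_bool (g x s) * eta x s)" for s
  proof -
    have eq: "(\<lambda>x. of_bool (g x s) * (1 - 2 * eta x s)) = (\<lambda>x. of_bool (g x s) - 2 * (of_bool (g x s) * eta x s))"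
      by (simp add: fun_eq_iff algebra_simps)
    have "bounded_borel (\<lambda>x. eta x s)"
      using reg by (rule bounded_borel_regression)
    then show ?thesis
      unfolding eq stratum_integral_cmult[symmetric] using g
      by (auto intro!: stratum_integral_diff bounded_borel_mult bounded_borel_classifier)
  qed
  ultimately show ?thesis by simp
qed

lemma risk_diff_eq_stratum_integrals:
  assumes reg: "is_regression P eta" and g: "measurable_sections g" and g': "measurable_sections g'"
  shows "risk P g - risk P g'
       = stratum_integral P True (\<lambda>x. (of_bool (g x True) - of_bool (g' x True)) * (1 - 2 * eta x True))
       + stratum_integral P False (\<lambda>x. (of_bool (g x False) - of_bool (g' x False)) * (1 - 2 * eta x False))"
proof -
  have "stratum_integral P s (\<lambda>x. (of_bool (g x s) - of_bool (g' x s)) * (1 - 2 * eta x s))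
      = stratum_integral P s (\<lambda>x. of_bool (g x s) * (1 - 2 * eta x s))
      - stratum_integral P s (\<lambda>x. of_bool (g' x s) * (1 - 2 * eta x s))" for s
    unfolding left_diff_distrib
    using g g' bounded_borel_regression[OF reg, of s]
    by (auto intro!: stratum_integral_diff bounded_borel_mult bounded_borel_diff bounded_borel_classifier)
  then show ?thesis
    unfolding risk_eq_stratum_integrals[OF reg g] risk_eq_stratum_integrals[OF reg g'] by simp
qed

lemma tpr_eq_stratum_integral:
  assumes reg: "is_regression P eta" and g: "measurable_sections g"
  shows "tpr P g s = stratum_integral P s (\<lambda>x. eta x s * of_bool (g x s)) / pYS P s"
proof -
  have "{z \<in> space P. g (fst z) (fst (snd z)) \<and> snd (snd z) \<and> fst (snd z) = s}
      = {z \<in> space P. fst (snd z) = s \<and> g (fst z) s \<and> snd (snd z)}"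
    by auto
  then show ?thesis
    unfolding tpr_def using measure_true_positives[OF reg g] by (simp add: mult.commute)
qed

end

lemma ratio_diff_bound:
  fixes a b A p e :: real
  assumes ab: "\<bar>a - b\<bar> \<le> e" and Ap: "\<bar>A - p\<bar> \<le> e" and b: "0 \<le> b" "b \<le> p"
    and A: "p / 2 \<le> A" and p: "0 < p"
  shows "\<bar>a / A - b / p\<bar> \<le> 4 * e / p"
proof -
  have A0: "0 < A" using A p by linarith
  have e0: "0 \<le> e" using ab by linarith
  have "\<bar>(a - b) * p\<bar> \<le> e * p" using ab p by (simp add: abs_mult mult_right_mono)
  moreover have "\<bar>b * (p - A)\<bar> \<le> p * e"
    using b Ap by (simp add: abs_mult abs_minus_commute mult_mono)
  ultimately have numerator: "\<bar>(a - b) * p + b * (p - A)\<bar> \<le> 2 * e * p"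
    using abs_triangle_ineq[of "(a - b) * p" "b * (p - A)"] by (simp add: algebra_simps)
  have "\<bar>a / A - b / p\<bar> = \<bar>(a - b) * p + b * (p - A)\<bar> / (A * p)"
    using A0 p by (simp add: field_simps abs_divide abs_mult)
  also have "\<dots> \<le> 2 * e * p / (A * p)"
    using numerator A0 p by (intro divide_right_mono) auto
  also have "\<dots> = 2 * e / A" using p by simp
  also have "\<dots> \<le> 4 * e / p"
  proof -
    have "e * p \<le> e * (2 * A)" using A e0 by (intro mult_left_mono) auto
    then show ?thesis using A0 p by (simp add: field_simps)
  qed
  finally show ?thesis .
qed

lemma threshold_gap:
  fixes a b k :: real
  assumes a: "0 < a" "a \<le> 1" and b: "0 < b" "b \<le> 1" and k: "2 + a / b \<le> k"
  shows "a / 6 \<le> 1 / 2 - 1 / k"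
proof -
  have "(2 * b + a) / b \<le> k"
    using k b by (simp add: field_simps)
  moreover have pos: "0 < (2 * b + a) / b" using a b by simp
  ultimately have "1 / k \<le> 1 / ((2 * b + a) / b)"
    by (intro frac_le) auto
  then have "1 / k \<le> b / (2 * b + a)" by simp
  moreover have "a / 6 \<le> 1 / 2 - b / (2 * b + a)"
  proof -
    have "a * (2 * a + 4 * b) \<le> a * 6" using a b by (intro mult_left_mono) auto
    then show ?thesis using a b by (simp add: field_simps)
  qed
  ultimately show ?thesis by linarith
qed

definition upper_mass :: "('x::topological_space) obs measure \<Rightarrow> ('x \<Rightarrow> bool \<Rightarrow> real) \<Rightarrow> bool \<Rightarrow> real" where
  "upper_mass P eta s = stratum_integral P s (\<lambda>x. of_bool (1/2 \<le> eta x s))"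

text \<open>Below this total L1 error the estimated group masses are at least half the true
  ones and the pseudo-oracle's \<open>\<theta>\<close> lies in \<open>[-1, 1]\<close>.\<close>

definition error_threshold :: "('x::topological_space) obs measure \<Rightarrow> ('x \<Rightarrow> bool \<Rightarrow> real) \<Rightarrow> real" where
  "error_threshold P eta = min (min (pYS P True / 2) (pYS P False / 2))
     (min (upper_mass P eta False * pYS P True / 24) (upper_mass P eta True * pYS P False / 24))"

definition excess_risk_constant :: "('x::topological_space) obs measure \<Rightarrow> ('x \<Rightarrow> bool \<Rightarrow> real) \<Rightarrow> real" where
  "excess_risk_constant P eta = 2 + 4 / pYS P True + 4 / pYS P False + 1 / error_threshold P eta"

locale fair_regression = obs_prob_space P for P :: "('x::topological_space) obs measure" +
  fixes eta :: "'x \<Rightarrow> bool \<Rightarrow> real"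
  assumes regression: "is_regression P eta"
    and pS_True_pos: "0 < pS P True" and pS_True_less_1: "pS P True < 1"
    and condE_upper_pos: "\<And>s. condE P s (\<lambda>x. of_bool (1/2 \<le> eta x s)) > 0"
begin

lemma pS_pos: "0 < pS P s"
  using pS_True_pos pS_True_less_1 pS_True_plus_pS_False by (cases s) auto

lemma eta_nonneg: "0 \<le> eta x s" and eta_le_1: "eta x s \<le> 1"
  using regression by (rule regression_nonneg, rule regression_le_1)

lemma bounded_borel_eta [intro]: "bounded_borel (\<lambda>x. eta x s)"
  using regression by (rule bounded_borel_regression)

lemma measurable_eta [measurable]: "(\<lambda>x. eta x s) \<in> borel_measurable borel"
  using regression by (rule regression_measurable)

lemma upper_mass_pos: "0 < upper_mass P eta s"
  using condE_upper_pos[of s] pS_pos[of s]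
  unfolding upper_mass_def condE_eq_stratum_integral by (simp add: zero_less_divide_iff)

lemma upper_mass_le_pYS: "upper_mass P eta s / 2 \<le> pYS P s"
proof -
  have "upper_mass P eta s / 2 = stratum_integral P s (\<lambda>x. 1/2 * of_bool (1/2 \<le> eta x s))"
    unfolding upper_mass_def stratum_integral_cmult by simp
  also have "\<dots> \<le> stratum_integral P s (\<lambda>x. eta x s)"
  proof (rule stratum_integral_mono)
    have "Measurable.pred borel (\<lambda>x. 1/2 \<le> eta x s)" by measurable
    then show "bounded_borel (\<lambda>x. 1/2 * of_bool (1/2 \<le> eta x s))"
      by (intro bounded_borel_mult bounded_borel_const bounded_borel_of_bool)
  qed (auto simp: eta_nonneg)
  finally show ?thesis by (simp add: pYS_eq_stratum_integral[OF regression])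
qed

lemma pYS_pos: "0 < pYS P s"
  using upper_mass_le_pYS[of s] upper_mass_pos[of s] by simp

lemma error_threshold_pos: "0 < error_threshold P eta"
  unfolding error_threshold_def using pYS_pos upper_mass_pos by auto

lemma excess_risk_constant_ge:
  "2 + 4 / pYS P True + 4 / pYS P False \<le> excess_risk_constant P eta"
  "1 / error_threshold P eta \<le> excess_risk_constant P eta"
  using pYS_pos[of True] pYS_pos[of False] error_threshold_pos
  unfolding excess_risk_constant_def by (auto intro!: add_nonneg_nonneg)

lemma excess_risk_constant_nonneg: "0 \<le> excess_risk_constant P eta"
  using excess_risk_constant_ge(2) error_threshold_pos by (smt (verit) divide_pos_pos)

end

locale regression_estimate = fair_regression P eta for P :: "('x::topological_space) obs measure" and eta +
  fixes h :: "'x \<Rightarrow> bool \<Rightarrow> real"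
  assumes measurable_h [measurable]: "\<And>s. (\<lambda>x. h x s) \<in> borel_measurable borel"
    and h_nonneg: "\<And>x s. 0 \<le> h x s" and h_le_1: "\<And>x s. h x s \<le> 1"
begin

abbreviation est_mass :: "bool \<Rightarrow> real" where
  "est_mass s \<equiv> stratum_integral P s (\<lambda>x. h x s)"

abbreviation est_error :: "bool \<Rightarrow> real" where
  "est_error s \<equiv> stratum_integral P s (\<lambda>x. \<bar>eta x s - h x s\<bar>)"

abbreviation estimated_tpr :: "('x \<Rightarrow> bool \<Rightarrow> bool) \<Rightarrow> bool \<Rightarrow> real" where
  "estimated_tpr g s \<equiv> stratum_integral P s (\<lambda>x. h x s * of_bool (g x s)) / est_mass s"

lemma bounded_borel_h [intro]: "bounded_borel (\<lambda>x. h x s)"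
  by (intro bounded_borel_unit_interval) (auto simp: h_nonneg h_le_1)

lemma bounded_borel_abs_error [intro]: "bounded_borel (\<lambda>x. \<bar>eta x s - h x s\<bar>)"
  by (intro bounded_borel_abs bounded_borel_diff bounded_borel_eta bounded_borel_h)

lemma est_error_nonneg: "0 \<le> est_error s"
  by (rule stratum_integral_nonneg) simp

lemma est_mass_le_1: "est_mass s \<le> 1"
proof -
  have "est_mass s \<le> stratum_integral P s (\<lambda>_. 1)"
    by (rule stratum_integral_mono) (auto simp: h_le_1)
  also have "\<dots> \<le> 1"
    using pS_True_plus_pS_False pS_pos[of True] pS_pos[of False]
    by (cases s) (auto simp: stratum_integral_const)
  finally show ?thesis .
qed

lemma est_mass_close: "\<bar>est_mass s - pYS P s\<bar> \<le> est_error s"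
proof -
  have "est_mass s - pYS P s = stratum_integral P s (\<lambda>x. h x s - eta x s)"
    unfolding pYS_eq_stratum_integral[OF regression] by (rule stratum_integral_diff[symmetric]) auto
  also have "\<bar>\<dots>\<bar> \<le> stratum_integral P s (\<lambda>x. \<bar>h x s - eta x s\<bar>)"
    by (rule stratum_integral_abs)
  finally show ?thesis by (simp add: abs_minus_commute)
qed

text \<open>Meaningful for \<open>t < 1/2\<close>: an estimate with no mass above \<open>t\<close> misses a fixed
  fraction of the region \<open>\<eta> \<ge> 1/2\<close>, which costs L1 error.\<close>

lemma upper_mass_le_if_no_mass_above:
  assumes t: "0 \<le> t" and no_mass: "stratum_integral P s (\<lambda>x. h x s * of_bool (t \<le> h x s)) = 0"
  shows "(1/2 - t) * upper_mass P eta s \<le> est_error s"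
proof -
  have pointwise: "1/2 * of_bool (1/2 \<le> eta x s)
      \<le> h x s * of_bool (t \<le> h x s) + t * of_bool (1/2 \<le> eta x s) + \<bar>eta x s - h x s\<bar>" for x
    using t h_nonneg[of x s] abs_ge_self[of "eta x s - h x s"]
    by (cases "t \<le> h x s"; cases "1/2 \<le> eta x s") auto
  have indicators: "bounded_borel (\<lambda>x. of_bool (1/2 \<le> eta x s))" "bounded_borel (\<lambda>x. of_bool (t \<le> h x s))"
    by (intro bounded_borel_of_bool; measurable)+
  have "upper_mass P eta s / 2 = stratum_integral P s (\<lambda>x. 1/2 * of_bool (1/2 \<le> eta x s))"
    unfolding upper_mass_def stratum_integral_cmult by simp
  also have "\<dots> \<le> stratum_integral P s
      (\<lambda>x. h x s * of_bool (t \<le> h x s) + t * of_bool (1/2 \<le> eta x s) + \<bar>eta x s - h x s\<bar>)"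
    by (rule stratum_integral_mono[OF _ _ pointwise];
        intro bounded_borel_intros bounded_borel_h bounded_borel_abs_error indicators)
  also have "\<dots> = stratum_integral P s (\<lambda>x. h x s * of_bool (t \<le> h x s))
      + stratum_integral P s (\<lambda>x. t * of_bool (1/2 \<le> eta x s)) + est_error s"
    using indicators
    by (intro stratum_integral_add[THEN trans] arg_cong2[where f="(+)"] refl
        stratum_integral_add bounded_borel_intros bounded_borel_h bounded_borel_abs_error)
  also have "\<dots> = t * upper_mass P eta s + est_error s"
    unfolding no_mass stratum_integral_cmult upper_mass_def by simp
  finally show ?thesis by (simp add: algebra_simps)
qed

text \<open>A classifier thresholding \<open>h\<close> as \<open>1 \<le> h (2 - c)\<close> minimises the cost \<open>1 - (2 - c) h\<close>
  among all classifiers on group \<open>s\<close>; replacing \<open>h\<close> by \<open>\<eta>\<close> costs at most twice the L1 error.\<close>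

lemma stratum_excess_risk_le:
  assumes threshold: "\<And>x. g x s = (1 \<le> h x s * (2 - c))"
    and g: "measurable_sections g" and g': "measurable_sections g'"
  shows "stratum_integral P s (\<lambda>x. (of_bool (g x s) - of_bool (g' x s)) * (1 - 2 * eta x s))
       \<le> - c * (stratum_integral P s (\<lambda>x. h x s * of_bool (g x s))
                - stratum_integral P s (\<lambda>x. h x s * of_bool (g' x s)))
         + 2 * est_error s"
proof -
  have pointwise: "(of_bool (g x s) - of_bool (g' x s)) * (1 - 2 * eta x s)
      \<le> - c * (h x s * of_bool (g x s) - h x s * of_bool (g' x s)) + 2 * \<bar>eta x s - h x s\<bar>" for x
  proof -
    have "eta x s - h x s \<le> \<bar>eta x s - h x s\<bar>" "h x s - eta x s \<le> \<bar>eta x s - h x s\<bar>" by auto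
    then show ?thesis using threshold[of x]
      by (cases "g x s"; cases "g' x s") (auto simp: algebra_simps)
  qed
  have bounded: "bounded_borel (\<lambda>x. h x s * of_bool (g x s))" "bounded_borel (\<lambda>x. h x s * of_bool (g' x s))"
    "bounded_borel (\<lambda>x. \<bar>eta x s - h x s\<bar>)"
    using g g' by auto
  have "stratum_integral P s (\<lambda>x. (of_bool (g x s) - of_bool (g' x s)) * (1 - 2 * eta x s))
      \<le> stratum_integral P s
          (\<lambda>x. - c * (h x s * of_bool (g x s) - h x s * of_bool (g' x s)) + 2 * \<bar>eta x s - h x s\<bar>)"
    using g g' by (intro stratum_integral_mono[OF _ _ pointwise])
      (auto intro!: bounded_borel_intros bounded_borel_classifier)
  also have "\<dots> = - c * (stratum_integral P s (\<lambda>x. h x s * of_bool (g x s))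
                - stratum_integral P s (\<lambda>x. h x s * of_bool (g' x s))) + 2 * est_error s"
    using bounded by (simp add: stratum_integral_add stratum_integral_diff stratum_integral_cmult
        bounded_borel_diff bounded_borel_mult)
  finally show ?thesis .
qed

lemma estimated_tpr_close:
  assumes g: "measurable_sections g" and mass: "pYS P s / 2 \<le> est_mass s"
  shows "\<bar>estimated_tpr g s - tpr P g s\<bar> \<le> 4 * est_error s / pYS P s"
  unfolding tpr_eq_stratum_integral[OF regression g]
proof (rule ratio_diff_bound[OF _ est_mass_close _ _ mass pYS_pos])
  have bounded: "bounded_borel (\<lambda>x. h x s * of_bool (g x s))" "bounded_borel (\<lambda>x. eta x s * of_bool (g x s))"
    using g by auto
  have "\<bar>stratum_integral P s (\<lambda>x. h x s * of_bool (g x s)) - stratum_integral P s (\<lambda>x. eta x s * of_bool (g x s))\<bar>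
      \<le> stratum_integral P s (\<lambda>x. \<bar>h x s * of_bool (g x s) - eta x s * of_bool (g x s)\<bar>)"
    unfolding stratum_integral_diff[OF bounded, symmetric] by (rule stratum_integral_abs)
  also have "\<dots> \<le> est_error s"
    using bounded by (intro stratum_integral_mono) (auto simp: abs_minus_commute)
  finally show "\<bar>stratum_integral P s (\<lambda>x. h x s * of_bool (g x s))
      - stratum_integral P s (\<lambda>x. eta x s * of_bool (g x s))\<bar> \<le> est_error s" .
  show "0 \<le> stratum_integral P s (\<lambda>x. eta x s * of_bool (g x s))"
    by (intro stratum_integral_nonneg) (simp add: eta_nonneg)
  show "stratum_integral P s (\<lambda>x. eta x s * of_bool (g x s)) \<le> pYS P s"
    unfolding pYS_eq_stratum_integral[OF regression]
    using bounded by (intro stratum_integral_mono) (auto simp: eta_nonneg)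
qed

end

locale pseudo_oracle = regression_estimate P eta h for P :: "('x::topological_space) obs measure" and eta h +
  fixes \<theta> :: real and g :: "'x \<Rightarrow> bool \<Rightarrow> bool"
  assumes pseudo_eq: "pseudo_eq P h \<theta>"
    and measurable_g: "measurable_sections g" and fair_g: "fair P g"
begin

lemma gtil_threshold: "gtil P h \<theta> x s = (1 \<le> h x s * (2 - (if s then \<theta> else - \<theta>) / est_mass s))"
  using pS_pos[of s] by (cases s) (simp_all add: gtil_def condE_eq_stratum_integral)

lemma measurable_sections_gtil: "measurable_sections (gtil P h \<theta>)"
  unfolding measurable_sections_def gtil_threshold by measurable

lemma estimated_tpr_gtil_eq: "estimated_tpr (gtil P h \<theta>) True = estimated_tpr (gtil P h \<theta>) False"
  using pseudo_eq pS_pos[of True] pS_pos[of False]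
  unfolding pseudo_eq_def condE_eq_stratum_integral by simp

context
  assumes small_error: "est_error True + est_error False \<le> error_threshold P eta"
begin

lemma est_error_le_threshold: "est_error s \<le> error_threshold P eta"
  using small_error est_error_nonneg[of True] est_error_nonneg[of False] by (cases s) auto

lemma error_threshold_le:
  "error_threshold P eta \<le> pYS P s / 2"
  "error_threshold P eta \<le> upper_mass P eta (\<not> s) * pYS P s / 24"
  unfolding error_threshold_def by (cases s; auto)+

lemma est_mass_ge_half: "pYS P s / 2 \<le> est_mass s"
  using est_mass_close[of s] est_error_le_threshold[of s] error_threshold_le(1)[of s]
  by (auto simp: abs_le_iff)

lemma est_mass_pos: "0 < est_mass s"
  using est_mass_ge_half[of s] pYS_pos[of s] by linarith

lemma not_gtil_if_signed_theta_gt: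
  assumes "est_mass s < (if s then \<theta> else - \<theta>)"
  shows "\<not> gtil P h \<theta> x s"
proof -
  define r where "r = 2 - (if s then \<theta> else - \<theta>) / est_mass s"
  have "r < 1"
    using assms est_mass_pos[of s] unfolding r_def by (simp add: less_divide_eq)
  moreover have "h x s * r \<le> max 0 r"
    using h_nonneg[of x s] h_le_1[of x s] mult_right_mono[of "h x s" 1 r]
    by (cases "0 \<le> r") (auto simp: mult_nonneg_nonpos)
  ultimately have "h x s * r < 1" by linarith
  then show ?thesis unfolding gtil_threshold r_def by simp
qed

text \<open>If \<open>\<theta>\<close> pushed group \<open>s\<close> beyond its estimated mass, that group would get no positives;
  the pseudo-oracle equation then forces the other group to have none either, which its
  region \<open>\<eta> \<ge> 1/2\<close> forbids at this error level.\<close>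

lemma signed_theta_le_est_mass: "(if s then \<theta> else - \<theta>) \<le> est_mass s"
proof (rule ccontr)
  define \<theta>s where "\<theta>s = (if s then \<theta> else - \<theta>)"
  assume "\<not> (if s then \<theta> else - \<theta>) \<le> est_mass s"
  then have large: "est_mass s < \<theta>s" unfolding \<theta>s_def by simp
  then have "\<not> gtil P h \<theta> x s" for x
    unfolding \<theta>s_def by (rule not_gtil_if_signed_theta_gt)
  then have "estimated_tpr (gtil P h \<theta>) s = 0"
    by (simp add: stratum_integral_const)
  then have "estimated_tpr (gtil P h \<theta>) (\<not> s) = 0"
    using estimated_tpr_gtil_eq by (cases s) auto
  define k where "k = 2 + \<theta>s / est_mass (\<not> s)"
  have k: "2 + est_mass s / est_mass (\<not> s) \<le> k"
    unfolding k_def using large est_mass_pos[of "\<not> s"] by (simp add: divide_right_mono)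
  have gap: "est_mass s / 6 \<le> 1/2 - 1/k"
    using est_mass_pos est_mass_le_1 by (intro threshold_gap[OF _ _ _ _ k])
  have k_pos: "0 < k"
    using k divide_pos_pos[OF est_mass_pos[of s] est_mass_pos[of "\<not> s"]] by linarith
  have "(if \<not> s then \<theta> else - \<theta>) = - \<theta>s" unfolding \<theta>s_def by simp
  then have "gtil P h \<theta> x (\<not> s) = (1 \<le> h x (\<not> s) * k)" for x
    unfolding gtil_threshold k_def by simp
  also have "(1 \<le> h x (\<not> s) * k) = (1/k \<le> h x (\<not> s))" for x
    using k_pos by (simp add: divide_le_eq)
  finally have "gtil P h \<theta> x (\<not> s) = (1/k \<le> h x (\<not> s))" for x .
  with \<open>estimated_tpr (gtil P h \<theta>) (\<not> s) = 0\<close>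
  have "stratum_integral P (\<not> s) (\<lambda>x. h x (\<not> s) * of_bool (1/k \<le> h x (\<not> s))) = 0"
    using est_mass_pos[of "\<not> s"] by simp
  then have "(1/2 - 1/k) * upper_mass P eta (\<not> s) \<le> est_error (\<not> s)"
    using k_pos by (intro upper_mass_le_if_no_mass_above) auto
  moreover have "pYS P s / 12 * upper_mass P eta (\<not> s) \<le> (1/2 - 1/k) * upper_mass P eta (\<not> s)"
    using gap est_mass_ge_half[of s] upper_mass_pos[of "\<not> s"] by (intro mult_right_mono) auto
  moreover have "est_error (\<not> s) \<le> upper_mass P eta (\<not> s) * pYS P s / 24"
    using est_error_le_threshold error_threshold_le(2) by (rule order_trans)
  moreover have "0 < upper_mass P eta (\<not> s) * pYS P s"
    using upper_mass_pos[of "\<not> s"] pYS_pos[of s] by simp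
  ultimately show False by (simp add: field_simps)
qed

lemma abs_theta_le_1: "\<bar>\<theta>\<bar> \<le> 1"
  using signed_theta_le_est_mass[of True] signed_theta_le_est_mass[of False]
    est_mass_le_1[of True] est_mass_le_1[of False]
  by simp

lemma excess_risk_le_small_error:
  "risk P (gtil P h \<theta>) - risk P g
     \<le> (2 + 4 / pYS P True + 4 / pYS P False) * (est_error True + est_error False)"
proof -
  define tpr_gap where "tpr_gap = estimated_tpr g True - estimated_tpr g False"
  have "risk P (gtil P h \<theta>) - risk P g
      \<le> (- (\<theta> / est_mass True) * (stratum_integral P True (\<lambda>x. h x True * of_bool (gtil P h \<theta> x True))
            - stratum_integral P True (\<lambda>x. h x True * of_bool (g x True))) + 2 * est_error True)
       + (- (- \<theta> / est_mass False) * (stratum_integral P False (\<lambda>x. h x False * of_bool (gtil P h \<theta> x False))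
            - stratum_integral P False (\<lambda>x. h x False * of_bool (g x False))) + 2 * est_error False)"
    unfolding risk_diff_eq_stratum_integrals[OF regression measurable_sections_gtil measurable_g]
    by (intro add_mono stratum_excess_risk_le measurable_sections_gtil measurable_g) (simp_all add: gtil_threshold)
  also have "\<dots> = - \<theta> * (estimated_tpr (gtil P h \<theta>) True - estimated_tpr (gtil P h \<theta>) False)
      + \<theta> * tpr_gap + 2 * (est_error True + est_error False)"
    using est_mass_pos[of True] est_mass_pos[of False] unfolding tpr_gap_def by (simp add: field_simps)
  also have "\<dots> = \<theta> * tpr_gap + 2 * (est_error True + est_error False)"
    using estimated_tpr_gtil_eq by simp
  also have "\<theta> * tpr_gap \<le> \<bar>tpr_gap\<bar>"
    using abs_theta_le_1 mult_right_mono[of "\<bar>\<theta>\<bar>" 1 "\<bar>tpr_gap\<bar>"] abs_ge_self[of "\<theta> * tpr_gap"]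
    by (simp add: abs_mult)
  also have "\<bar>tpr_gap\<bar> \<le> 4 * est_error True / pYS P True + 4 * est_error False / pYS P False"
    using estimated_tpr_close[OF measurable_g est_mass_ge_half, of True]
      estimated_tpr_close[OF measurable_g est_mass_ge_half, of False] fair_g
    unfolding tpr_gap_def fair_def by linarith
  also have "4 * est_error True / pYS P True \<le> 4 / pYS P True * (est_error True + est_error False)"
    using est_error_nonneg[of False] pYS_pos[of True] by (simp add: divide_right_mono)
  also have "4 * est_error False / pYS P False \<le> 4 / pYS P False * (est_error True + est_error False)"
    using est_error_nonneg[of True] pYS_pos[of False] by (simp add: divide_right_mono)
  finally show ?thesis by (simp add: algebra_simps)
qed

end

lemma excess_risk_le:
  "risk P (gtil P h \<theta>) - risk P g \<le> excess_risk_constant P eta * (est_error True + est_error False)"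
proof (cases "est_error True + est_error False \<le> error_threshold P eta")
  case True
  then show ?thesis
    using excess_risk_le_small_error excess_risk_constant_ge(1) est_error_nonneg[of True] est_error_nonneg[of False]
    by (smt (verit) mult_right_mono)
next
  case False
  have "risk P (gtil P h \<theta>) - risk P g \<le> 1"
    unfolding risk_def using prob_le_1 measure_nonneg by (smt (verit))
  also have "1 \<le> 1 / error_threshold P eta * (est_error True + est_error False)"
    using False error_threshold_pos by (simp add: field_simps)
  also have "\<dots> \<le> excess_risk_constant P eta * (est_error True + est_error False)"
    using excess_risk_constant_ge(2) est_error_nonneg[of True] est_error_nonneg[of False]
    by (intro mult_right_mono) auto
  finally show ?thesis .
qed

end

lemma integral_mono_AE_upper_integrable:
  fixes f g :: "'a \<Rightarrow> real"
  assumes "AE x in M. f x \<le> g x" and "integrable M g" and "0 \<le> integral\<^sup>L M g"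
  shows "integral\<^sup>L M f \<le> integral\<^sup>L M g"
proof (cases "integrable M f")
  case True
  then show ?thesis using assms by (intro integral_mono_AE)
next
  case False
  then show ?thesis using assms by (simp add: not_integrable_integral_eq)
qed

lemma limsup_ereal_nonpos_if_le_tendsto_0:
  fixes a b :: "nat \<Rightarrow> real"
  assumes "\<And>n. a n \<le> b n" and "b \<longlonglongrightarrow> 0"
  shows "limsup (\<lambda>n. ereal (a n)) \<le> 0"
proof -
  have "limsup (\<lambda>n. ereal (a n)) \<le> limsup (\<lambda>n. ereal (b n))"
    using assms(1) by (intro Limsup_mono) simp
  also have "\<dots> = 0"
    using assms(2) by (simp add: lim_imp_Limsup zero_ereal_def)
  finally show ?thesis .
qed

lemma prob_space_sample: "prob_space P \<Longrightarrow> prob_space (sample P n)"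
  unfolding sample_def by (rule prob_space_PiM)

lemma measurable_estimator_section:
  assumes "(\<lambda>(D, x, s). f D x s) \<in> borel_measurable (M \<Otimes>\<^sub>M (borel \<Otimes>\<^sub>M count_space UNIV))"
    and "D \<in> space M"
  shows "(\<lambda>x. f D x s) \<in> borel_measurable borel"
proof -
  have "(\<lambda>x. (D, x, s)) \<in> measurable borel (M \<Otimes>\<^sub>M (borel \<Otimes>\<^sub>M count_space UNIV))"
    using assms(2) by measurable
  from measurable_compose[OF this assms(1)] show ?thesis by simp
qed

lemma (in obs_prob_space) measurable_condE_estimator_error:
  assumes f: "(\<lambda>(D, x, s). f D x s) \<in> borel_measurable (M \<Otimes>\<^sub>M (borel \<Otimes>\<^sub>M count_space UNIV))"
    and eta [measurable]: "(\<lambda>x. eta x s) \<in> borel_measurable borel"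
  shows "(\<lambda>D. condE P s (\<lambda>x. \<bar>eta x s - f D x s\<bar>)) \<in> borel_measurable M"
proof -
  have "(\<lambda>p. (fst p, fst (snd p), s)) \<in> measurable (M \<Otimes>\<^sub>M P) (M \<Otimes>\<^sub>M (borel \<Otimes>\<^sub>M count_space UNIV))"
    by measurable
  from measurable_compose[OF this f]
  have [measurable]: "(\<lambda>p. f (fst p) (fst (snd p)) s) \<in> borel_measurable (M \<Otimes>\<^sub>M P)"
    by simp
  have "(\<lambda>(D, z). if fst (snd z) = s then \<bar>eta (fst z) s - f D (fst z) s\<bar> else 0)
      \<in> borel_measurable (M \<Otimes>\<^sub>M P)"
    by measurable
  then have "(\<lambda>D. \<integral>z. (if fst (snd z) = s then \<bar>eta (fst z) s - f D (fst z) s\<bar> else 0) \<partial>P)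
      \<in> borel_measurable M"
    by (rule borel_measurable_lebesgue_integral)
  then show ?thesis unfolding condE_def by measurable
qed

context fair_regression
begin

lemma condE_abs_error_nonneg: "0 \<le> condE P s (\<lambda>x. \<bar>eta x s - f x s\<bar>)"
  unfolding condE_eq_stratum_integral using pS_pos[of s]
  by (intro divide_nonneg_pos stratum_integral_nonneg) auto

lemma integrable_condE_estimator_error:
  assumes M: "prob_space M"
    and f_meas: "(\<lambda>(D, x, s). f D x s) \<in> borel_measurable (M \<Otimes>\<^sub>M (borel \<Otimes>\<^sub>M count_space UNIV))"
    and f_range: "\<And>D x s. 0 \<le> f D x s \<and> f D x s \<le> 1"
  shows "integrable M (\<lambda>D. condE P s (\<lambda>x. \<bar>eta x s - f D x s\<bar>))"
proof -
  interpret M: prob_space M by (rule M)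
  have "condE P s (\<lambda>x. \<bar>eta x s - f D x s\<bar>) \<le> 1" if "D \<in> space M" for D
  proof -
    have "bounded_borel (\<lambda>x. \<bar>eta x s - f D x s\<bar>)"
      using measurable_estimator_section[OF f_meas that] f_range
      by (intro bounded_borel_intros bounded_borel_eta bounded_borel_unit_interval) auto
    moreover have "\<bar>eta x s - f D x s\<bar> \<le> 1" for x
      using eta_nonneg[of x s] eta_le_1[of x s] f_range[of D x s] by (auto simp: abs_le_iff)
    ultimately have "stratum_integral P s (\<lambda>x. \<bar>eta x s - f D x s\<bar>) \<le> stratum_integral P s (\<lambda>_. 1)"
      by (intro stratum_integral_mono) auto
    then show ?thesis
      unfolding condE_eq_stratum_integral stratum_integral_const using pS_pos[of s] by simp
  qed
  then show ?thesis
    using condE_abs_error_nonneg measurable_condE_estimator_error[OF f_meas measurable_eta]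
    by (intro M.integrable_const_bound[where B=1] AE_I2) auto
qed

lemma excess_risk_le_condE_error:
  assumes h: "\<And>s. (\<lambda>x. h x s) \<in> borel_measurable borel" "\<And>x s. 0 \<le> h x s \<and> h x s \<le> 1"
    and "pseudo_eq P h \<theta>" and "measurable_sections g" "fair P g"
  shows "risk P (gtil P h \<theta>) - risk P g
       \<le> excess_risk_constant P eta * (pS P True * condE P True (\<lambda>x. \<bar>eta x True - h x True\<bar>)
                                      + pS P False * condE P False (\<lambda>x. \<bar>eta x False - h x False\<bar>))"
proof -
  interpret pseudo_oracle P eta h \<theta> g
    using assms by unfold_locales auto
  have "est_error s = pS P s * condE P s (\<lambda>x. \<bar>eta x s - h x s\<bar>)" for s
    unfolding condE_eq_stratum_integral using pS_pos[of s] by simp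
  then show ?thesis using excess_risk_le by simp
qed

lemma expected_excess_risk_le:
  assumes M: "prob_space M"
    and f_meas: "(\<lambda>(D, x, s). f D x s) \<in> borel_measurable (M \<Otimes>\<^sub>M (borel \<Otimes>\<^sub>M count_space UNIV))"
    and f_range: "\<And>D x s. 0 \<le> f D x s \<and> f D x s \<le> 1"
    and pseudo: "AE D in M. pseudo_eq P (f D) (\<theta> D)"
    and g: "measurable_sections g" "fair P g"
  shows "(\<integral>D. risk P (gtil P (f D) (\<theta> D)) \<partial>M) - risk P g
       \<le> excess_risk_constant P eta
           * (pS P True * (\<integral>D. condE P True (\<lambda>x. \<bar>eta x True - f D x True\<bar>) \<partial>M)
              + pS P False * (\<integral>D. condE P False (\<lambda>x. \<bar>eta x False - f D x False\<bar>) \<partial>M))"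
proof -
  interpret M: prob_space M by (rule M)
  define err where "err s D = condE P s (\<lambda>x. \<bar>eta x s - f D x s\<bar>)" for s D
  define K where "K = excess_risk_constant P eta"
  define bound where "bound D = risk P g + K * (pS P True * err True D + pS P False * err False D)" for D
  have err_integrable: "integrable M (err s)" for s
    unfolding err_def using M f_meas f_range by (rule integrable_condE_estimator_error)
  have integral_bound: "integral\<^sup>L M bound
      = risk P g + K * (pS P True * integral\<^sup>L M (err True) + pS P False * integral\<^sup>L M (err False))"
    unfolding bound_def using err_integrable by (simp add: M.prob_space)
  have "AE D in M. risk P (gtil P (f D) (\<theta> D)) \<le> bound D"
    using pseudo AE_space[of M]
  proof eventually_elim
    case (elim D)
    then show ?case
      using excess_risk_le_condE_error[of "f D" "\<theta> D", OF measurable_estimator_section[OF f_meas elim(2)]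
          f_range elim(1) g]
      unfolding bound_def err_def K_def by simp
  qed
  moreover have "integrable M bound"
    unfolding bound_def using err_integrable by simp
  moreover have "0 \<le> integral\<^sup>L M bound"
    unfolding integral_bound err_def K_def risk_def
    using excess_risk_constant_nonneg pS_pos[of True] pS_pos[of False] condE_abs_error_nonneg
    by (intro add_nonneg_nonneg mult_nonneg_nonneg measure_nonneg integral_nonneg_AE) auto
  ultimately have "(\<integral>D. risk P (gtil P (f D) (\<theta> D)) \<partial>M) \<le> integral\<^sup>L M bound"
    by (rule integral_mono_AE_upper_integrable)
  then show ?thesis unfolding integral_bound err_def K_def by simp
qed

end

theorem mainTheorem7:
  fixes P :: "(real ^ 'd) obs measure"
    and eta :: "real ^ 'd \<Rightarrow> bool \<Rightarrow> real"
    and eta_hat :: "nat \<Rightarrow> (nat \<Rightarrow> (real ^ 'd) obs) \<Rightarrow> real ^ 'd \<Rightarrow> bool \<Rightarrow> real"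
    and theta_til :: "nat \<Rightarrow> (nat \<Rightarrow> (real ^ 'd) obs) \<Rightarrow> real"
    and gstar :: "real ^ 'd \<Rightarrow> bool \<Rightarrow> bool"
    and c :: "nat \<Rightarrow> real"
    and N :: "nat \<Rightarrow> nat"
  assumes P: "prob_space P" "sets P = sets obs_space"
    and pS_bounds: "0 < pS P True" "pS P True < 1"
    and pY_bounds: "0 < pY P" "pY P < 1"
    and eta: "is_regression P eta"
    \<comment> \<open>Continuity Assumption\<close>
    and cont: "\<And>s. continuous_on {0<..<1} (\<lambda>t. condE P s (\<lambda>x. of_bool (eta x s \<le> t)))"
    and half: "\<And>s. condE P s (\<lambda>x. of_bool (eta x s \<ge> 1/2)) > 0"
    \<comment> \<open>the estimator eta_hat n is built from D_n\<close>
    and eh_meas: "\<And>n. (\<lambda>(D, x, s). eta_hat n D x s)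
                      \<in> borel_measurable (sample P n \<Otimes>\<^sub>M (borel \<Otimes>\<^sub>M count_space UNIV))"
    and eh_range: "\<And>n D x s. 0 \<le> eta_hat n D x s \<and> eta_hat n D x s \<le> 1"
    \<comment> \<open>Consistency Assumption (i)\<close>
    and consist: "\<And>s. (\<lambda>n. \<integral>D. condE P s (\<lambda>x. \<bar>eta x s - eta_hat n D x s\<bar>) \<partial>sample P n)
                        \<longlonglongrightarrow> 0"
    \<comment> \<open>Consistency Assumption (ii)\<close>
    and c_pos: "\<And>n. c n > 0"
    and c_lim: "c \<longlonglongrightarrow> 0"
    and cN_lim: "(\<lambda>n. 1 / (c n * sqrt (real (N n)))) \<longlonglongrightarrow> 0"
    and c_bound: "\<And>n s. AE D in sample P n. condE P s (\<lambda>x. eta_hat n D x s) \<ge> c n"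
    \<comment> \<open>Estimator Continuity Assumption\<close>
    and eh_cont: "\<And>n. AE D in sample P n. \<forall>s.
                     continuous_on {0<..<1} (\<lambda>t. condE P s (\<lambda>x. of_bool (eta_hat n D x s \<le> t)))"
    \<comment> \<open>theta_til n D is a solution of the pseudo-oracle equation\<close>
    and theta_meas: "\<And>n. theta_til n \<in> borel_measurable (sample P n)"
    and theta_sol: "\<And>n. AE D in sample P n. pseudo_eq P (eta_hat n D) (theta_til n D)"
    \<comment> \<open>gstar is the optimal fair classifier\<close>
    and gstar: "optimal_fair P gstar" "fair_form P eta gstar"
  shows "limsup (\<lambda>n. ereal ((\<integral>D. risk P (gtil P (eta_hat n D) (theta_til n D)) \<partial>sample P n)
                            - risk P gstar)) \<le> 0"
proof -
  interpret fair_regression P eta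
    using P pS_bounds eta half
    by (simp add: fair_regression_def fair_regression_axioms_def obs_prob_space_def obs_prob_space_axioms_def)
  have gstar_fair: "measurable_sections gstar" "fair P gstar"
    using gstar(1) unfolding optimal_fair_def by (auto intro: classifier_imp_measurable_sections)
  let ?err = "\<lambda>n s. \<integral>D. condE P s (\<lambda>x. \<bar>eta x s - eta_hat n D x s\<bar>) \<partial>sample P n"
  have "(\<integral>D. risk P (gtil P (eta_hat n D) (theta_til n D)) \<partial>sample P n) - risk P gstar
      \<le> excess_risk_constant P eta * (pS P True * ?err n True + pS P False * ?err n False)" for n
    using prob_space_sample[OF P(1)] eh_meas eh_range theta_sol gstar_fair
    by (rule expected_excess_risk_le)
  moreover have "(\<lambda>n. excess_risk_constant P eta * (pS P True * ?err n True + pS P False * ?err n False))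
      \<longlonglongrightarrow> excess_risk_constant P eta * (pS P True * 0 + pS P False * 0)"
    using consist[of True] consist[of False] by (intro tendsto_intros)
  ultimately show ?thesis
    by (intro limsup_ereal_nonpos_if_le_tendsto_0) simp_all
qed

end
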